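(* Let $B\ge 2$ and $\eta\in\mathbb{N}$. Suppose that either $B\ge 3$ and $\gamma_B(\eta+1)>2(B-1)^2$, or $B=2$ and $\gamma_B(\eta+1)\ge B^2=4$. Then $\gamma_B(\eta)<\gamma_B(\eta+1)<\gamma_B(\eta+2)<\cdots<\gamma_B(\eta+k)$ for every $k\in\mathbb{N}$; that is, the sequence $(\gamma_B(n))_{n\ge\eta}$ is strictly increasing.
   Context: Fix an integer base $B \geq 2$. Every integer $x>0$ is written uniquely as $x=\sum_{i=0}^{L(x)-1} x_i B^i$ with digits $0 \le x_i \le B-1$ and $x_{L(x)-1}\neq 0$. Define $\mathcal{H}_B(x)=\sum_{i=0}^{L(x)-1} x_i^2$, $\mathcal{H}_B(0)=0$, $\mathcal{H}_B^0(x)=x$, $\mathcal{H}_B^{n}=\mathcal{H}_B\circ\mathcal{H}_B^{n-1}$. A positive integer $x$ is happy if $\mathcal{H}_B^n(x)=1$ for some $n\in\mathbb{N}$; its height is $\eta_B(x)=\min\{\alpha\in\mathbb{N}:\mathcal{H}_B^\alpha(x)=1\}$. For $n\in\mathbb{N}$, $\gamma_B(n)$ denotes the smallest happy number $x\ge 1$ with $\eta_B(x)=n$. *)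

theory Defs
  imports Main
begin

text \<open>Sum of the squares of the base-B digits of x (H_B), with H_B(0) = 0.
  The guard B < 2 only serves termination; the paper always has B >= 2.\<close>
function happyH :: "nat \<Rightarrow> nat \<Rightarrow> nat" where
  "happyH B x = (if B < 2 \<or> x = 0 then 0 else (x mod B)^2 + happyH B (x div B))"
  by pat_completeness auto
termination
  by (relation "measure (\<lambda>(B, x). x)") auto

declare happyH.simps [simp del]

definition happy :: "nat \<Rightarrow> nat \<Rightarrow> bool" where
  "happy B x \<longleftrightarrow> x > 0 \<and> (\<exists>n. (happyH B ^^ n) x = 1)"

definition height :: "nat \<Rightarrow> nat \<Rightarrow> nat" where
  "height B x = (LEAST a. (happyH B ^^ a) x = 1)"

definition gamma :: "nat \<Rightarrow> nat \<Rightarrow> nat" where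
  "gamma B n = (LEAST x. x \<ge> 1 \<and> happy B x \<and> height B x = n)"

end

theory Submission
  imports Defs
begin

text \<open>For B \<ge> 2 a number with at least three digits is mapped strictly below itself, and
  every number up to 2(B-1)^2 (which has at most two digits) is mapped to at most 2(B-1)^2.
  Since the last step of the orbit of \<gamma>(n+1) is a happy number of height n, we have
  \<gamma>(n) \<le> H(\<gamma>(n+1)). Hence once \<gamma>(n+1) exceeds 2(B-1)^2, so does \<gamma>(n+2) (otherwise
  \<gamma>(n+1) \<le> H(\<gamma>(n+2)) \<le> 2(B-1)^2), and \<gamma>(n) \<le> H(\<gamma>(n+1)) < \<gamma>(n+1).
  For B = 2 the hypothesis \<gamma>(\<eta>+1) \<ge> 4 also gives \<gamma>(\<eta>+1) > 2(B-1)^2 = 2.\<close>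

lemma happyH_digit: "B \<ge> 2 \<Longrightarrow> happyH B x = (x mod B)^2 + happyH B (x div B)"
  by (cases "x = 0") (simp_all add: happyH.simps[of B x] happyH.simps[of B 0])

lemma happyH_0 [simp]: "happyH B 0 = 0"
  by (simp add: happyH.simps)

lemma funpow_happyH_0 [simp]: "(happyH B ^^ n) 0 = 0"
  by (induction n) simp_all

lemma happyH_le_mult: assumes "B \<ge> 2" shows "happyH B x \<le> (B - 1) * x"
proof (induction x rule: less_induct)
  case (less x)
  show ?case
  proof (cases "x = 0")
    case False
    have "x mod B \<le> B - 1" using assms mod_less_divisor[of B x] by linarith
    hence "(x mod B)^2 \<le> (B - 1) * (x mod B)" by (simp add: power2_eq_square)
    moreover have "happyH B (x div B) \<le> (B - 1) * (B * (x div B))"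
      using less[of "x div B"] False assms by (simp add: order_trans)
    ultimately have "happyH B x \<le> (B - 1) * (B * (x div B) + x mod B)"
      unfolding happyH_digit[OF assms, of x] distrib_left by linarith
    thus ?thesis by simp
  qed simp
qed

lemma happyH_two_digits_le:
  assumes "B \<ge> 2" "x < B^2"
  shows "happyH B x \<le> 2 * (B - 1)^2"
proof -
  have "x div B < B" using assms by (simp add: less_mult_imp_div_less power2_eq_square)
  hence "happyH B x = (x mod B)^2 + (x div B)^2"
    using happyH_digit[OF assms(1), of x] happyH_digit[OF assms(1), of "x div B"] by simp
  moreover have "x mod B \<le> B - 1" "x div B \<le> B - 1"
    using \<open>x div B < B\<close> assms(1) mod_less_divisor[of B x] by linarith+
  hence "(x mod B)^2 \<le> (B - 1)^2" "(x div B)^2 \<le> (B - 1)^2"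
    by (simp_all add: power_mono)
  ultimately show ?thesis by linarith
qed

lemma happyH_less_three_digits:
  assumes "B \<ge> 2" "B^2 \<le> x"
  shows "happyH B x < x"
proof -
  define r r' q where "r = x mod B" and "r' = x div B mod B" and "q = x div B div B"
  have "x = B * (B * q + r') + r" unfolding r_def r'_def q_def by simp
  hence x: "x = B * B * q + B * r' + r" by (simp add: algebra_simps)
  have "1 \<le> q"
    using assms unfolding q_def
    by (simp add: div_mult2_eq[symmetric] power2_eq_square Suc_le_eq div_greater_zero_iff)
  have digits: "r \<le> B - 1" "r' \<le> B - 1"
    using assms(1) mod_less_divisor[of B x] mod_less_divisor[of B "x div B"]
    unfolding r_def r'_def by linarith+
  have "happyH B x = r * r + r' * r' + happyH B q"
    using happyH_digit[OF assms(1), of x] happyH_digit[OF assms(1), of "x div B"]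
    unfolding r_def r'_def q_def by (simp add: power2_eq_square)
  also have "\<dots> \<le> (B - 1) * (B - 1) + B * r' + (B - 1) * q"
    using digits happyH_le_mult[OF assms(1), of q] by (intro add_mono mult_mono) auto
  also have "\<dots> < B * B * q + B * r'"
  proof -
    obtain b where "B = Suc b" using assms(1) by (cases B) auto
    moreover obtain p where "q = Suc p" using \<open>1 \<le> q\<close> by (cases q) auto
    ultimately show ?thesis by (simp add: algebra_simps)
  qed
  finally show ?thesis using x by linarith
qed

lemma happyH_less:
  assumes "B \<ge> 2" "2 * (B - 1)^2 < x"
  shows "happyH B x < x"
  using happyH_less_three_digits[OF assms(1)] happyH_two_digits_le[OF assms(1)] assms(2)
  by (meson leI le_less_trans)

lemma happyH_le_bound:
  assumes "B \<ge> 2" "x \<le> 2 * (B - 1)^2"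
  shows "happyH B x \<le> 2 * (B - 1)^2"
  using happyH_less_three_digits[OF assms(1)] happyH_two_digits_le[OF assms(1)] assms(2)
  by (meson leI less_imp_le order.trans)

lemma happy_iff_happy_happyH:
  assumes "x \<noteq> 1"
  shows "happy B x \<longleftrightarrow> 0 < x \<and> happy B (happyH B x)"
proof -
  have "(\<exists>n. (happyH B ^^ n) x = 1) \<longleftrightarrow> (\<exists>m. (happyH B ^^ m) (happyH B x) = 1)"
    using assms by (metis funpow_0 funpow_Suc_right o_apply not0_implies_Suc)
  moreover have "(happyH B ^^ m) (happyH B x) = 1 \<Longrightarrow> 0 < happyH B x" for m
    by (cases "happyH B x") auto
  ultimately show ?thesis unfolding happy_def by blast
qed

lemma height_eq_Suc_height_happyH:
  assumes "x \<noteq> 1" "happy B (happyH B x)"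
  shows "height B x = Suc (height B (happyH B x))"
proof -
  let ?Q = "\<lambda>m. (happyH B ^^ m) (happyH B x) = 1"
  obtain m where m: "?Q m" using assms(2) unfolding happy_def by blast
  have "(happyH B ^^ Suc k) x = (happyH B ^^ k) (happyH B x)" for k
    by (simp add: funpow_Suc_right del: funpow.simps)
  with m assms(1) show ?thesis
    unfolding height_def by (intro Least_Suc2[where Q = ?Q and m = m and n = "Suc m"]) auto
qed

lemma happy_pos: "happy B x \<Longrightarrow> 0 < x"
  by (simp add: happy_def)

lemma height_1: "height B 1 = 0"
  by (simp add: height_def)

fun repunit :: "nat \<Rightarrow> nat \<Rightarrow> nat" where
  "repunit B 0 = 0"
| "repunit B (Suc k) = B * repunit B k + 1"

lemma happyH_repunit: "B \<ge> 2 \<Longrightarrow> happyH B (repunit B k) = k"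
proof (induction k)
  case (Suc k)
  have "Suc (B * repunit B k) mod B = 1" "Suc (B * repunit B k) div B = repunit B k"
    using Suc.prems by (simp_all add: mod_Suc div_Suc)
  thus ?case using happyH_digit[OF Suc.prems, of "Suc (B * repunit B k)"] Suc.IH[OF Suc.prems] by simp
qed simp

lemma happyH_times_base: "B \<ge> 2 \<Longrightarrow> happyH B (B * x) = happyH B x"
  using happyH_digit[of B "B * x"] by simp

lemma ex_happy_height:
  assumes "B \<ge> 2"
  shows "\<exists>x. 1 \<le> x \<and> happy B x \<and> height B x = n"
proof (induction n)
  case 0
  have "happy B 1" unfolding happy_def by (metis funpow_0 zero_less_one)
  thus ?case using height_1 by blast
next
  case (Suc n)
  then obtain x where x: "1 \<le> x" "happy B x" "height B x = n" by blast
  define y where "y = B * repunit B x"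
  have Hy: "happyH B y = x"
    unfolding y_def using assms by (simp add: happyH_times_base happyH_repunit)
  have "1 \<le> repunit B x" using x(1) by (cases x) auto
  hence "2 \<le> y" unfolding y_def using assms by (metis mult_le_mono nat_mult_1_right)
  hence "happy B y" "height B y = Suc n"
    using happy_iff_happy_happyH[of y B] height_eq_Suc_height_happyH[of y B] Hy x by auto
  with \<open>2 \<le> y\<close> show ?case by (intro exI[of _ y]) simp
qed

lemma gamma_happy_height:
  assumes "B \<ge> 2"
  shows "1 \<le> gamma B n \<and> happy B (gamma B n) \<and> height B (gamma B n) = n"
  using ex_happy_height[OF assms, of n] unfolding gamma_def by (rule LeastI_ex)

lemma gamma_le: "1 \<le> x \<Longrightarrow> happy B x \<Longrightarrow> height B x = n \<Longrightarrow> gamma B n \<le> x"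
  unfolding gamma_def by (rule Least_le) simp

lemma gamma_le_happyH_gamma_Suc:
  assumes "B \<ge> 2"
  shows "gamma B n \<le> happyH B (gamma B (Suc n))"
proof -
  let ?g = "gamma B (Suc n)"
  have g: "happy B ?g" "height B ?g = Suc n" using gamma_happy_height[OF assms] by auto
  hence "?g \<noteq> 1" using height_1 by auto
  hence "happy B (happyH B ?g)" "height B (happyH B ?g) = n"
    using g happy_iff_happy_happyH height_eq_Suc_height_happyH by auto
  thus ?thesis using happy_pos by (intro gamma_le) (auto simp: Suc_le_eq)
qed

lemma gamma_Suc_Suc_gt:
  assumes "B \<ge> 2" "2 * (B - 1)^2 < gamma B (Suc n)"
  shows "2 * (B - 1)^2 < gamma B (Suc (Suc n))"
  using gamma_le_happyH_gamma_Suc[OF assms(1), of "Suc n"] happyH_le_bound[OF assms(1)] assms(2)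
  by (meson le_less_trans not_le)

lemma gamma_less_gamma_Suc:
  assumes "B \<ge> 2" "2 * (B - 1)^2 < gamma B (Suc n)"
  shows "gamma B n < gamma B (Suc n)"
  using gamma_le_happyH_gamma_Suc[OF assms(1), of n] happyH_less[OF assms] by simp

theorem lemma2p3:
  fixes B \<eta> :: nat
  assumes "B \<ge> 2"
    and "(B \<ge> 3 \<and> gamma B (\<eta> + 1) > 2 * (B - 1)^2) \<or> (B = 2 \<and> gamma B (\<eta> + 1) \<ge> 4)"
  shows "strict_mono_on {\<eta>..} (gamma B)"
proof -
  have bound: "2 * (B - 1)^2 < gamma B (Suc n)" if "\<eta> \<le> n" for n
    using that
  proof (induction n rule: dec_induct)
    case base
    show ?case using assms(2) by auto
  next
    case (step n)
    thus ?case using gamma_Suc_Suc_gt[OF assms(1)] by blast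
  qed
  have step: "gamma B n < gamma B (Suc n)" if "n \<in> {\<eta>..}" for n
    using that bound gamma_less_gamma_Suc[OF assms(1)] by simp
  show ?thesis
  proof (rule strict_mono_onI)
    fix m n assume "m \<in> {\<eta>..}" "m < n"
    show "gamma B m < gamma B n"
      by (rule lift_Suc_mono_less_ivl[of "{\<eta>..}"]) (use step \<open>m \<in> {\<eta>..}\<close> \<open>m < n\<close> in auto)
  qed
qed

end
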